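(* Let $X$ be a nonempty set, $f:X\to X$ a function, and $\tau_2$ the fuzzy topology on $X$ defined below. Then $f:(X,\tau_2)\to(X,\tau_2)$ is open if and only if $f$ is onto.
   Context: A fuzzy subset of $X$ is a function $\mu:X\to[0,1]$; union is the pointwise supremum, intersection the pointwise minimum; $\emptyset$ is the constant $0$ and $X$ the constant $1$. A fuzzy topology is a family of fuzzy subsets containing $\emptyset$ and $X$, closed under arbitrary unions and finite intersections; the topology generated by a base $\mathbb{B}$ consists of $\emptyset$ and all unions of subfamilies of $\mathbb{B}$. $\mathbb{N}=\{1,2,\dots\}$, $f^0=\mathrm{id}_X$, $f^{n+1}=f^n\circ f$. Definition of $\tau_2$: $J_0=\bigcap_{n\in\mathbb{N}} f^n(X)$, $J_n=f^{n-1}(X)\setminus f^n(X)$ for $n\in\mathbb{N}$; for $m\in\mathbb{N}$, $\mu_{K_m}(x)=\min\{1,n/m\}$ if $x\in J_n$ with $n\ge1$, and $\mu_{K_m}(x)=1$ otherwise; $\tau_2$ is generated by the base $\{K_m:m\in\mathbb{N}\}$. The image of a fuzzy set $A$ is $\mu_{f(A)}(y)=\sup\{\mu_A(x):f(x)=y\}$, and $0$ if $y\notin f(X)$. $f$ is open if $f(U)$ is open for every open fuzzy set $U$. *)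

theory Defs
  imports Main Complex_Main
begin

text \<open>Fuzzy subsets of the type 'a (the ambient set X = UNIV) are functions 'a => real
  with values in [0,1].  Union = pointwise supremum.\<close>

definition fuzzy_empty :: "'a \<Rightarrow> real" where
  "fuzzy_empty = (\<lambda>x. 0)"

definition fuzzy_Union :: "('a \<Rightarrow> real) set \<Rightarrow> ('a \<Rightarrow> real)" where
  "fuzzy_Union B = (\<lambda>x. if B = {} then 0 else (SUP \<mu>\<in>B. \<mu> x))"

definition generated_topology :: "('a \<Rightarrow> real) set \<Rightarrow> ('a \<Rightarrow> real) set" where
  "generated_topology Base = {fuzzy_empty} \<union> {fuzzy_Union B | B. B \<subseteq> Base}"

definition J0 :: "('a \<Rightarrow> 'a) \<Rightarrow> 'a set" where
  "J0 f = (\<Inter>n\<in>{1..}. range (f ^^ n))"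

definition J :: "('a \<Rightarrow> 'a) \<Rightarrow> nat \<Rightarrow> 'a set" where
  "J f n = range (f ^^ (n - 1)) - range (f ^^ n)"

definition K :: "('a \<Rightarrow> 'a) \<Rightarrow> nat \<Rightarrow> 'a \<Rightarrow> real" where
  "K f m x = (if \<exists>n\<ge>1. x \<in> J f n
              then min 1 (real (THE n. n \<ge> 1 \<and> x \<in> J f n) / real m)
              else 1)"

definition tau2 :: "('a \<Rightarrow> 'a) \<Rightarrow> ('a \<Rightarrow> real) set" where
  "tau2 f = generated_topology {K f m | m. m \<ge> 1}"

definition fuzzy_image :: "('a \<Rightarrow> 'b) \<Rightarrow> ('a \<Rightarrow> real) \<Rightarrow> ('b \<Rightarrow> real)" where
  "fuzzy_image f A = (\<lambda>y. if y \<in> range f then (SUP x\<in>f -` {y}. A x) else 0)"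

definition fuzzy_open_map :: "('a \<Rightarrow> real) set \<Rightarrow> ('b \<Rightarrow> real) set \<Rightarrow> ('a \<Rightarrow> 'b) \<Rightarrow> bool" where
  "fuzzy_open_map T S f = (\<forall>U\<in>T. fuzzy_image f U \<in> S)"

end

theory Submission
  imports Defs
begin

text \<open>Every basic open set \<open>K f m\<close> is strictly positive everywhere, so every nonempty open set
  of \<open>\<tau>\<^sub>2\<close> is strictly positive everywhere.  The whole space \<open>K f 1\<close> is open, and its image
  vanishes exactly off \<open>range f\<close>; hence openness of \<open>f\<close> forces \<open>f\<close> to be onto.  Conversely, for
  onto \<open>f\<close> all the sets \<open>J f n\<close> are empty, \<open>\<tau>\<^sub>2\<close> is the indiscrete topology, and the image of a
  constant fuzzy set under an onto map is the same constant.\<close>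

lemma range_funpow_antimono:
  fixes f :: "'a \<Rightarrow> 'a"
  assumes "b \<le> a"
  shows "range (f ^^ a) \<subseteq> range (f ^^ b)"
proof -
  have "f ^^ a = f ^^ b \<circ> f ^^ (a - b)"
    using assms funpow_add[of b "a - b" f] by simp
  then show ?thesis by auto
qed

lemma J_unique:
  assumes "n \<ge> 1" "k \<ge> 1" "x \<in> J f n" "x \<in> J f k"
  shows "n = k"
proof (rule ccontr)
  assume "n \<noteq> k"
  then consider "n < k" | "k < n" by linarith
  then show False
  proof cases
    case 1
    then have "range (f ^^ (k - 1)) \<subseteq> range (f ^^ n)" by (intro range_funpow_antimono) simp
    then show False using assms(3,4) unfolding J_def by blast
  next
    case 2
    then have "range (f ^^ (n - 1)) \<subseteq> range (f ^^ k)" by (intro range_funpow_antimono) simp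
    then show False using assms(3,4) unfolding J_def by blast
  qed
qed

lemma THE_J:
  assumes "n \<ge> 1" "x \<in> J f n"
  shows "(THE n. n \<ge> 1 \<and> x \<in> J f n) = n"
  using assms J_unique[of _ n x f] by (intro the_equality) blast+

lemma K_eq_J:
  assumes "n \<ge> 1" "x \<in> J f n"
  shows "K f m x = min 1 (real n / real m)"
  using assms THE_J[OF assms] unfolding K_def by auto

lemma K_outside_J:
  assumes "\<not> (\<exists>n\<ge>1. x \<in> J f n)"
  shows "K f m x = 1"
  unfolding K_def using assms by (rule if_not_P)

lemma K_pos:
  assumes "m \<ge> 1"
  shows "0 < K f m x"
proof (cases "\<exists>n\<ge>1. x \<in> J f n")
  case True
  then obtain n where "n \<ge> 1" "x \<in> J f n" by blast
  then show ?thesis using assms K_eq_J[of n x f m] by simp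
qed (simp add: K_outside_J)

lemma K_le_one: "K f m x \<le> 1"
  unfolding K_def by simp

lemma K_one: "K f 1 = (\<lambda>x. 1)"
proof
  fix x
  show "K f 1 x = 1"
  proof (cases "\<exists>n\<ge>1. x \<in> J f n")
    case True
    then obtain n where "n \<ge> 1" "x \<in> J f n" by blast
    then show ?thesis using K_eq_J[of n x f 1] by simp
  qed (rule K_outside_J)
qed

lemma K_surj:
  assumes "surj f"
  shows "K f m = (\<lambda>x. 1)"
proof -
  have "J f n = {}" for n
    using surj_fn[OF assms] unfolding J_def by simp
  then show ?thesis unfolding K_def by simp
qed

lemma fuzzy_Union_singleton: "fuzzy_Union {\<mu>} = \<mu>"
  unfolding fuzzy_Union_def by simp

lemma fuzzy_Union_pos:
  assumes "B \<noteq> {}" "\<And>\<mu>. \<mu> \<in> B \<Longrightarrow> 0 < \<mu> x" "\<And>\<mu>. \<mu> \<in> B \<Longrightarrow> \<mu> x \<le> c"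
  shows "0 < fuzzy_Union B x"
proof -
  obtain \<mu> where \<mu>: "\<mu> \<in> B" using assms(1) by blast
  have "bdd_above ((\<lambda>\<mu>. \<mu> x) ` B)" using assms(3) by (intro bdd_aboveI) auto
  then have "\<mu> x \<le> (SUP \<nu>\<in>B. \<nu> x)" using \<mu> by (rule cSUP_upper[rotated])
  then show ?thesis using assms(1) assms(2)[OF \<mu>] by (simp add: fuzzy_Union_def)
qed

lemma base_subset_generated_topology: "Base \<subseteq> generated_topology Base"
  unfolding generated_topology_def by (force simp: fuzzy_Union_singleton)

lemma fuzzy_empty_in_generated_topology: "fuzzy_empty \<in> generated_topology Base"
  unfolding generated_topology_def by simp

lemma tau2_open_pos:
  assumes "U \<in> tau2 f" "U \<noteq> fuzzy_empty"
  shows "0 < U x"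
proof -
  obtain B where B: "B \<subseteq> {K f m | m. m \<ge> 1}" "U = fuzzy_Union B"
    using assms unfolding tau2_def generated_topology_def by blast
  have "B \<noteq> {}"
    using assms(2) B(2) by (auto simp: fuzzy_Union_def fuzzy_empty_def)
  with B show ?thesis
    by (auto intro!: fuzzy_Union_pos[where c = 1] K_pos K_le_one)
qed

lemma whole_space_in_tau2: "(\<lambda>x. 1) \<in> tau2 f"
  using base_subset_generated_topology K_one[of f] unfolding tau2_def by force

lemma tau2_surj:
  assumes "surj f"
  shows "tau2 f = {fuzzy_empty, (\<lambda>x. 1)}"
proof
  show "tau2 f \<subseteq> {fuzzy_empty, (\<lambda>x. 1)}"
  proof
    fix U assume "U \<in> tau2 f"
    then obtain B where "B \<subseteq> {(\<lambda>x. 1)}" "U = fuzzy_empty \<or> U = fuzzy_Union B"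
      unfolding tau2_def generated_topology_def K_surj[OF assms] by auto
    then show "U \<in> {fuzzy_empty, (\<lambda>x. 1)}"
      by (auto simp: subset_singleton_iff fuzzy_Union_def fuzzy_empty_def)
  qed
  show "{fuzzy_empty, (\<lambda>x. 1)} \<subseteq> tau2 f"
    using whole_space_in_tau2 by (simp add: tau2_def fuzzy_empty_in_generated_topology)
qed

lemma fuzzy_image_outside_range: "y \<notin> range f \<Longrightarrow> fuzzy_image f A y = 0"
  unfolding fuzzy_image_def by simp

lemma fuzzy_image_const_on_range:
  assumes "y \<in> range f"
  shows "fuzzy_image f (\<lambda>x. c) y = c"
proof -
  have "f -` {y} \<noteq> {}" using assms by blast
  then show ?thesis using assms unfolding fuzzy_image_def by simp
qed

lemma fuzzy_image_const_surj: "surj f \<Longrightarrow> fuzzy_image f (\<lambda>x. c) = (\<lambda>y. c)"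
  using fuzzy_image_const_on_range[of _ f c] by auto

theorem theorem2p10:
  fixes f :: "'a \<Rightarrow> 'a"
  shows "fuzzy_open_map (tau2 f) (tau2 f) f \<longleftrightarrow> surj f"
proof
  assume "fuzzy_open_map (tau2 f) (tau2 f) f"
  then have open_image: "fuzzy_image f (\<lambda>x. 1) \<in> tau2 f"
    using whole_space_in_tau2 unfolding fuzzy_open_map_def by blast
  have "fuzzy_image f (\<lambda>x. 1) (f x) = 1" for x
    by (simp add: fuzzy_image_const_on_range)
  then have "fuzzy_image f (\<lambda>x. 1) \<noteq> fuzzy_empty"
    by (metis fuzzy_empty_def zero_neq_one)
  then have "0 < fuzzy_image f (\<lambda>x. 1) y" for y
    using open_image by (rule tau2_open_pos[rotated])
  then show "surj f"
    using fuzzy_image_outside_range by (metis less_irrefl surj_def rangeE)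
next
  assume "surj f"
  then show "fuzzy_open_map (tau2 f) (tau2 f) f"
    unfolding fuzzy_open_map_def tau2_surj[OF \<open>surj f\<close>] fuzzy_empty_def
    by (simp add: fuzzy_image_const_surj)
qed

end
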